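(* Let $m\ge 1$ and $n=2m$. For each integer $k$ with $0\le k\le 2^m$ define $$S_k=\{\,j\in\mathbb{Z}/(2^m-1)\mathbb{Z}\;:\;\mathrm{wt}_n\big((2^m+1)j+(2^m-1)k\big)<m\,\}.$$ Then $|S_k|\le 2^{m-1}$ for every $0\le k\le 2^m$, and equality $|S_k|=2^{m-1}$ holds if and only if $m$ is odd and $k=0$.
   Context: For a positive integer $n$ and an integer $u$, $\mathrm{wt}_n(u)$ denotes the number of 1's in the binary expansion of the unique representative of $u$ modulo $2^n-1$ lying in $\{0,1,\ldots,2^n-2\}$. (Note that $\mathrm{wt}_n((2^m+1)j+(2^m-1)k)$ depends only on $j$ modulo $2^m-1$ when $k$ is fixed.) *)

theory Defs
  imports Main
begin

definition wt :: "nat \<Rightarrow> int \<Rightarrow> nat" where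
  "wt n u = card {i. bit (nat (u mod (2 ^ n - 1))) i}"

definition S :: "nat \<Rightarrow> int \<Rightarrow> int set" where
  "S m k = {j \<in> {0..<2 ^ m - 1}. wt (2 * m) ((2 ^ m + 1) * j + (2 ^ m - 1) * k) < m}"

end

theory Submission
  imports Defs
begin

text \<open>Write \<open>q = 2^m\<close> and \<open>N = 2^(2m) - 1 = (q + 1)(q - 1)\<close>. The involution \<open>j \<mapsto> -j\<close> of
  \<open>\<int>/(q - 1)\<close> changes \<open>(q + 1)j + (q - 1)k\<close> into a number congruent to \<open>-q\<close> times it modulo \<open>N\<close>.
  Multiplying by \<open>2^m\<close> only rotates the \<open>2m\<close> binary digits of a residue, and negation complements
  them, so the weight \<open>w\<close> becomes \<open>2m - w\<close> unless the residue is zero. The involution thus pairs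
  the elements of \<open>S_k\<close> with those of weight above \<open>m\<close>, and \<open>2|S_k|\<close> plus the number of
  elements of weight exactly \<open>m\<close> is the size of the domain. For \<open>k \<noteq> 0\<close> no residue vanishes,
  because \<open>q + 1\<close> is odd and does not divide \<open>2k\<close>, so \<open>2|S_k| \<le> 2^m - 1\<close>. For \<open>k = 0\<close> only
  \<open>j = 0\<close> is exceptional, the weight of \<open>(q + 1)j\<close> is twice that of \<open>j\<close>, and a \<open>j\<close> of weight
  \<open>m/2\<close> exists iff \<open>m\<close> is even.\<close>

unbundle bit_operations_syntax

definition popcount :: "nat \<Rightarrow> nat" where
  "popcount x = card {i. bit x i}"

lemma bit_imp_less_of_less_exp:
  fixes x :: nat
  assumes "x < 2 ^ m" and "bit x i"
  shows "i < m"
proof -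
  have "take_bit m x = x"
    using assms(1) by (simp add: take_bit_nat_eq_self_iff)
  then show ?thesis
    using assms(2) by (metis bit_take_bit_iff)
qed

lemma finite_bit_nat: "finite {i. bit (x :: nat) i}"
proof (rule finite_subset)
  show "{i. bit x i} \<subseteq> {..<x}"
    using bit_imp_less_of_less_exp[OF less_exp[of x]] by auto
qed simp

lemma popcount_add_mult_exp:
  fixes a b :: nat
  assumes "b < 2 ^ i"
  shows "popcount (b + 2 ^ i * a) = popcount b + popcount a"
proof -
  have shifted: "bit (2 ^ i * a) j \<longleftrightarrow> i \<le> j \<and> bit a (j - i)" for j
    using bit_push_bit_iff'[of i a j] by (simp add: push_bit_eq_mult mult.commute)
  have "bit (b + 2 ^ i * a) j \<longleftrightarrow> bit b j \<or> bit (2 ^ i * a) j" for j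
    by (rule bit_disjunctive_add_iff) (use bit_imp_less_of_less_exp[OF assms] shifted in force)
  moreover have "(\<lambda>j. j + i) ` {j. bit a j} = {j. i \<le> j \<and> bit a (j - i)}"
    by (auto simp: image_iff) (metis le_add_diff_inverse2)
  ultimately have bits: "{j. bit (b + 2 ^ i * a) j} = {j. bit b j} \<union> (\<lambda>j. j + i) ` {j. bit a j}"
    by (auto simp: shifted)
  have "{j. bit b j} \<inter> (\<lambda>j. j + i) ` {j. bit a j} = {}"
    using bit_imp_less_of_less_exp[OF assms] by auto
  moreover have "card ((\<lambda>j. j + i) ` {j. bit a j}) = popcount a"
    unfolding popcount_def by (rule card_image) (simp add: inj_on_def)
  ultimately show ?thesis
    unfolding popcount_def bits by (simp add: card_Un_disjoint finite_bit_nat)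
qed

lemma popcount_complement:
  fixes x :: nat
  assumes "x < 2 ^ m"
  shows "popcount (2 ^ m - 1 - x) = m - popcount x"
proof -
  have "int (2 ^ m - 1 - x) = mask m - int x"
    using assms by (simp add: mask_eq_exp_minus_1 of_nat_diff)
  also have "\<dots> = mask m AND NOT (int x)"
    using bit_imp_less_of_less_exp[OF assms] by (intro disjunctive_diff) (auto simp: bit_simps)
  finally have "bit (2 ^ m - 1 - x) i \<longleftrightarrow> i < m \<and> \<not> bit x i" for i
    by (metis bit_and_iff bit_mask_iff bit_not_iff bit_of_nat_iff_bit possible_bit_int)
  then have "{i. bit (2 ^ m - 1 - x) i} = {..<m} - {i. bit x i}"
    by auto
  moreover have "{i. bit x i} \<subseteq> {..<m}"
    using bit_imp_less_of_less_exp[OF assms] by auto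
  ultimately show ?thesis
    unfolding popcount_def by (simp add: card_Diff_subset finite_bit_nat)
qed

lemma of_nat_exp_minus_1: "int (2 ^ n - 1) = 2 ^ n - 1"
  by (simp add: of_nat_diff)

lemma wt_of_nat:
  assumes "x < 2 ^ n - 1"
  shows "wt n (int x) = popcount x"
proof -
  have "int x < 2 ^ n - 1"
    unfolding of_nat_exp_minus_1[symmetric] of_nat_less_iff by (fact assms)
  then show ?thesis
    by (simp add: wt_def popcount_def)
qed

lemma wt_mod: "wt n (u mod (2 ^ n - 1)) = wt n u"
  by (simp add: wt_def)

lemma wt_cong:
  assumes "u mod (2 ^ n - 1) = v mod (2 ^ n - 1)"
  shows "wt n u = wt n v"
  using assms by (simp add: wt_def)

lemma wt_double:
  assumes "0 < n"
  shows "wt n (2 * u) = wt n u"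
proof -
  define P :: nat where "P = 2 ^ (n - 1)"
  have P: "1 \<le> P" "2 ^ n = 2 * P"
    using assms by (simp_all add: P_def flip: power_Suc)
  have N: "(0::int) < 2 ^ n - 1"
    using assms by simp
  define r where "r = nat (u mod (2 ^ n - 1))"
  have r: "u mod (2 ^ n - 1) = int r" "r < 2 ^ n - 1"
    using pos_mod_sign[OF N, of u] pos_mod_bound[OF N, of u]
    unfolding r_def by (simp_all add: nat_less_iff of_nat_exp_minus_1)
  define a c where "a = r mod P" and "c = r div P"
  have rac: "r = a + 2 ^ (n - 1) * c" and a: "a < P"
    using P by (simp_all add: a_def c_def P_def)
  have c_lt: "c < 2"
    unfolding c_def using r(2) P by (intro less_mult_imp_div_less) simp
  then have c: "c = 0 \<or> c = 1"
    by auto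
  \<comment> \<open>doubling moves the top digit \<open>c\<close> of \<open>r\<close> to the bottom\<close>
  define v where "v = c + 2 * a"
  have v: "v < 2 ^ n - 1" "2 * r = v + (2 ^ n - 1) * c"
    using c a r(2) P by (auto simp: v_def rac P_def)
  have "(2 * u) mod (2 ^ n - 1) = int (2 * r) mod (2 ^ n - 1)"
    by (simp add: mod_mult_right_eq flip: r(1))
  also have "\<dots> = int v mod (2 ^ n - 1)"
    unfolding v(2) by (simp add: of_nat_exp_minus_1)
  finally have "wt n (2 * u) = wt n (int v)"
    by (metis wt_mod)
  also have "\<dots> = popcount a + popcount c"
    using wt_of_nat[OF v(1)] popcount_add_mult_exp[of c 1 a] c_lt by (simp add: v_def)
  also have "\<dots> = wt n u"
    using wt_of_nat[OF r(2)] wt_mod[of n u] popcount_add_mult_exp[of a "n - 1" c] a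
    by (simp add: r(1) rac P_def)
  finally show ?thesis .
qed

lemma wt_mult_exp:
  assumes "0 < n"
  shows "wt n (2 ^ i * u) = wt n u"
proof (induction i)
  case (Suc i)
  then show ?case
    using wt_double[OF assms, of "2 ^ i * u"] by (simp add: mult.assoc)
qed simp

lemma wt_uminus:
  assumes "0 < n" and "u mod (2 ^ n - 1) \<noteq> 0"
  shows "wt n (- u) = n - wt n u"
proof -
  have N: "(0::int) < 2 ^ n - 1"
    using assms(1) by simp
  define r where "r = nat (u mod (2 ^ n - 1))"
  have r: "u mod (2 ^ n - 1) = int r" "0 < r" "r < 2 ^ n - 1"
    using assms(2) pos_mod_sign[OF N, of u] pos_mod_bound[OF N, of u]
    unfolding r_def by (simp_all add: nat_less_iff of_nat_exp_minus_1)
  have "(- u) mod (2 ^ n - 1) = int (2 ^ n - 1 - r)"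
    using r by (simp add: zmod_zminus1_eq_if of_nat_diff)
  then have "wt n (- u) = wt n (int (2 ^ n - 1 - r))"
    by (intro wt_cong) (metis mod_mod_trivial)
  also have "\<dots> = popcount (2 ^ n - 1 - r)"
    using r by (intro wt_of_nat) simp
  also have "\<dots> = n - popcount r"
    using r(3) by (intro popcount_complement) simp
  also have "popcount r = wt n u"
    using wt_of_nat[OF r(3)] wt_mod[of n u] by (simp add: r(1))
  finally show ?thesis .
qed

lemma card_reflected_by_involution:
  fixes f :: "'a \<Rightarrow> nat"
  assumes "finite J"
    and maps: "\<And>j. j \<in> J \<Longrightarrow> \<tau> j \<in> J"
    and invol: "\<And>j. j \<in> J \<Longrightarrow> \<tau> (\<tau> j) = j"
    and reflect: "\<And>j. j \<in> J \<Longrightarrow> f (\<tau> j) = 2 * c - f j"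
  shows "2 * card {j \<in> J. f j < c} + card {j \<in> J. f j = c} = card J"
proof -
  have bounded: "f j \<le> 2 * c" if "j \<in> J" for j
    using reflect[OF maps[OF that]] invol[OF that] by simp
  define below above middle
    where "below = {j \<in> J. f j < c}" and "above = {j \<in> J. c < f j}" and "middle = {j \<in> J. f j = c}"
  have "\<tau> ` below = above"
  proof (intro equalityI subsetI)
    fix x assume "x \<in> \<tau> ` below"
    then show "x \<in> above"
      using maps reflect by (auto simp: below_def above_def)
  next
    fix x assume x: "x \<in> above"
    then have "f (\<tau> x) < c" and "x = \<tau> (\<tau> x)"
      using reflect[of x] invol[of x] bounded[of x] by (auto simp: above_def)
    then show "x \<in> \<tau> ` below"
      using maps x by (auto simp: below_def above_def)
  qed
  moreover have "inj_on \<tau> below"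
    using invol by (metis (mono_tags, lifting) below_def inj_onI mem_Collect_eq)
  ultimately have "card above = card below"
    using card_image by blast
  moreover have "card J = card below + card above + card middle"
  proof -
    have "J = below \<union> above \<union> middle"
      by (auto simp: below_def above_def middle_def)
    moreover have "finite below" "finite above" "finite middle"
      using \<open>finite J\<close> by (simp_all add: below_def above_def middle_def)
    moreover have "below \<inter> above = {}" "(below \<union> above) \<inter> middle = {}"
      by (auto simp: below_def above_def middle_def)
    ultimately show ?thesis
      by (simp add: card_Un_disjoint)
  qed
  ultimately show ?thesis
    by (simp add: below_def middle_def)
qed

lemma reflection_mod_eq_neg_mult:
  fixes q j k :: int
  shows "((q + 1) * ((- j) mod (q - 1)) + (q - 1) * k) mod ((q + 1) * (q - 1))
       = (- (q * ((q + 1) * j + (q - 1) * k))) mod ((q + 1) * (q - 1))"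
proof -
  have "(q + 1) * ((- j) mod (q - 1)) + (q - 1) * k
      = - (q * ((q + 1) * j + (q - 1) * k)) + (q + 1) * (q - 1) * (j + k - (- j) div (q - 1))"
    by (simp add: algebra_simps flip: minus_div_mult_eq_mod)
  then show ?thesis
    by (metis mod_mult_self2)
qed

lemma plus_one_not_dvd_reflection_sum:
  fixes q j k :: int
  assumes "even q" and "0 < k" and "k \<le> q"
  shows "\<not> (q + 1) dvd ((q + 1) * j + (q - 1) * k)"
proof
  assume "(q + 1) dvd ((q + 1) * j + (q - 1) * k)"
  moreover have "(q + 1) * j + (q - 1) * k = (q + 1) * (j + k) - 2 * k"
    by (simp add: algebra_simps)
  ultimately have "(q + 1) dvd (q + 1) * (j + k) - ((q + 1) * (j + k) - 2 * k)"
    by (metis dvd_diff dvd_triv_left)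
  then have "(q + 1) dvd 2 * k"
    by simp
  then have "(q + 1) dvd k"
    using assms(1) by (simp add: coprime_dvd_mult_right_iff)
  then show False
    using assms(2,3) zdvd_not_zless by force
qed

lemma wt_reflection:
  fixes m :: nat and j k :: int
  assumes "0 < m" and "\<not> (2 ^ (2 * m) - 1) dvd ((2 ^ m + 1) * j + (2 ^ m - 1) * k)"
  shows "wt (2 * m) ((2 ^ m + 1) * ((- j) mod (2 ^ m - 1)) + (2 ^ m - 1) * k)
       = 2 * m - wt (2 * m) ((2 ^ m + 1) * j + (2 ^ m - 1) * k)"
proof -
  define q :: int where "q = 2 ^ m"
  define U where "U = (q + 1) * j + (q - 1) * k"
  have N: "(2::int) ^ (2 * m) - 1 = (q + 1) * (q - 1)"
    by (simp add: q_def algebra_simps flip: power_add mult_2)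
  have "wt (2 * m) ((q + 1) * ((- j) mod (q - 1)) + (q - 1) * k) = wt (2 * m) (- (q * U))"
    unfolding U_def by (rule wt_cong) (simp only: N reflection_mod_eq_neg_mult)
  also have "\<dots> = wt (2 * m) (2 ^ m * (- U))"
    by (simp add: q_def)
  also have "\<dots> = wt (2 * m) (- U)"
    using assms(1) by (intro wt_mult_exp) simp
  also have "\<dots> = 2 * m - wt (2 * m) U"
    using assms by (intro wt_uminus) (simp_all add: U_def q_def dvd_eq_mod_eq_0)
  finally show ?thesis
    by (simp add: U_def q_def)
qed

lemma S_subset: "S m k \<subseteq> {0..<2 ^ m - 1}"
  by (auto simp: S_def)

lemma card_S_reflection:
  fixes m :: nat and k :: int and R :: "int set"
  assumes "0 < m" and R: "R \<subseteq> {0..<2 ^ m - 1}"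
    and maps: "\<And>j. j \<in> R \<Longrightarrow> (- j) mod (2 ^ m - 1) \<in> R"
    and nonzero: "\<And>j. j \<in> R \<Longrightarrow> \<not> (2 ^ (2 * m) - 1) dvd ((2 ^ m + 1) * j + (2 ^ m - 1) * k)"
  shows "2 * card (S m k \<inter> R) + card {j \<in> R. wt (2 * m) ((2 ^ m + 1) * j + (2 ^ m - 1) * k) = m}
       = card R"
proof -
  have "S m k \<inter> R = {j \<in> R. wt (2 * m) ((2 ^ m + 1) * j + (2 ^ m - 1) * k) < m}"
    using R by (auto simp: S_def)
  moreover have "finite R"
    using R by (rule finite_subset) simp
  ultimately show ?thesis
  proof (simp only:, intro card_reflected_by_involution)
    show "(- ((- j) mod (2 ^ m - 1))) mod (2 ^ m - 1) = j" if "j \<in> R" for j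
      using R that by (auto simp: mod_minus_eq)
  qed (use maps wt_reflection[OF assms(1) nonzero] in simp_all)
qed

lemma card_S_less:
  fixes m :: nat and k :: int
  assumes "0 < m" and "0 < k" and "k \<le> 2 ^ m"
  shows "2 * card (S m k) < 2 ^ m"
proof -
  have N: "(2::int) ^ (2 * m) - 1 = (2 ^ m + 1) * (2 ^ m - 1)"
    by (simp add: algebra_simps flip: power_add mult_2)
  have nonzero: "\<not> (2 ^ (2 * m) - 1) dvd ((2 ^ m + 1) * j + (2 ^ m - 1) * k)" for j :: int
    using plus_one_not_dvd_reflection_sum[of "2 ^ m" k j] assms unfolding N by (auto dest: dvd_mult_left)
  have maps: "(- j) mod (2 ^ m - 1) \<in> {0..<2 ^ m - 1}" for j :: int
    using assms(1) by simp
  have S_within: "S m k \<inter> {0..<2 ^ m - 1} = S m k"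
    using S_subset by blast
  have "2 * card (S m k) \<le> card {0..<(2::int) ^ m - 1}"
    using card_S_reflection[OF assms(1) subset_refl maps nonzero] unfolding S_within by linarith
  also have "card {0..<(2::int) ^ m - 1} = 2 ^ m - 1"
    by (simp add: nat_diff_distrib nat_power_eq)
  finally show ?thesis
    using zero_less_power[of "2::nat" m] by linarith
qed

lemma wt_exp_plus_one_mult:
  fixes m :: nat and j :: int
  assumes "0 \<le> j" and "j < 2 ^ m - 1"
  shows "wt (2 * m) ((2 ^ m + 1) * j) = 2 * popcount (nat j)"
proof -
  define x where "x = nat j"
  have x: "int (x + 2 ^ m * x) = (2 ^ m + 1) * j"
    using assms by (simp add: x_def algebra_simps)
  also have "\<dots> \<le> (2 ^ m + 1) * (2 ^ m - 2)"
    using assms by (intro mult_left_mono) simp_all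
  also have "\<dots> < 2 ^ (2 * m) - 1"
    by (simp add: algebra_simps add_pos_pos flip: power_add mult_2)
  also have "\<dots> = int (2 ^ (2 * m) - 1)"
    by (rule of_nat_exp_minus_1[symmetric])
  finally have "wt (2 * m) ((2 ^ m + 1) * j) = popcount (x + 2 ^ m * x)"
    unfolding of_nat_less_iff x[symmetric] by (rule wt_of_nat)
  also have "\<dots> = popcount x + popcount x"
    using assms(2) by (intro popcount_add_mult_exp) (simp add: x_def nat_less_iff)
  finally show ?thesis
    by (simp add: x_def)
qed

lemma card_S_zero:
  fixes m :: nat
  assumes "0 < m"
  shows "2 * card (S m 0) + card {j \<in> {1..<2 ^ m - 1}. 2 * popcount (nat j) = m} = 2 ^ m"
proof -
  define R :: "int set" where "R = {1..<2 ^ m - 1}"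
  have maps: "(- j) mod (2 ^ m - 1) \<in> R" if "j \<in> R" for j
    using that by (simp add: R_def zmod_zminus1_eq_if)
  have nonzero: "\<not> (2 ^ (2 * m) - 1) dvd ((2 ^ m + 1) * j + (2 ^ m - 1) * 0)" if "j \<in> R" for j
  proof (rule zdvd_not_zless)
    have "(2 ^ m + 1) * j \<le> (2 ^ m + 1) * (2 ^ m - 2)"
      using that by (intro mult_left_mono) (simp_all add: R_def)
    also have "\<dots> < 2 ^ (2 * m) - 1"
      by (simp add: algebra_simps add_pos_pos flip: power_add mult_2)
    finally show "(2 ^ m + 1) * j + (2 ^ m - 1) * 0 < 2 ^ (2 * m) - 1"
      by simp
  qed (use that in \<open>simp add: R_def\<close>)
  have "wt (2 * m) ((2 ^ m + 1) * j + (2 ^ m - 1) * 0) = 2 * popcount (nat j)" if "j \<in> R" for j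
    using that by (simp add: R_def wt_exp_plus_one_mult)
  then have "{j \<in> R. wt (2 * m) ((2 ^ m + 1) * j + (2 ^ m - 1) * 0) = m}
      = {j \<in> R. 2 * popcount (nat j) = m}"
    by (intro Collect_cong conj_cong refl) (simp only:)
  moreover have "S m 0 \<inter> R = S m 0 - {0}"
    using S_subset[of m 0] by (auto simp: R_def)
  ultimately have "2 * card (S m 0 - {0}) + card {j \<in> R. 2 * popcount (nat j) = m} = card R"
    using card_S_reflection[OF assms _ maps nonzero] by (simp add: R_def subset_eq)
  moreover have "card (S m 0 - {0}) = card (S m 0) - 1" and "0 < card (S m 0)"
  proof -
    have "0 \<in> S m 0"
      using assms by (simp add: S_def wt_def bot_fun_def)
    moreover have "finite (S m 0)"
      using S_subset by (rule finite_subset) simp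
    ultimately show "card (S m 0 - {0}) = card (S m 0) - 1" and "0 < card (S m 0)"
      by (auto simp: card_gt_0_iff)
  qed
  moreover have "card R = 2 ^ m - 2" and "(2::nat) \<le> 2 ^ m"
    using assms by (simp_all add: R_def nat_diff_distrib' nat_power_eq self_le_power)
  ultimately show ?thesis
    unfolding R_def by linarith
qed

lemma balanced_popcount_empty_iff:
  fixes m :: nat
  assumes "0 < m"
  shows "{j \<in> {1..<(2::int) ^ m - 1}. 2 * popcount (nat j) = m} = {} \<longleftrightarrow> odd m"
proof
  assume empty: "{j \<in> {1..<(2::int) ^ m - 1}. 2 * popcount (nat j) = m} = {}"
  show "odd m"
  proof
    assume "even m"
    then obtain t where m: "m = 2 * t" and "0 < t"
      using assms by auto
    have "popcount (nat (2 ^ t - 1)) = t"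
      using popcount_complement[of 0 t] by (simp add: popcount_def nat_diff_distrib' nat_power_eq bot_fun_def)
    moreover have "(2::int) ^ t - 1 \<in> {1..<2 ^ m - 1}"
      using \<open>0 < t\<close> by (simp add: m self_le_power)
    ultimately show False
      using empty m by auto
  qed
qed auto

theorem proposition2:
  fixes m :: nat and k :: int
  assumes "m \<ge> 1" and "0 \<le> k" and "k \<le> 2 ^ m"
  shows "card (S m k) \<le> 2 ^ (m - 1) \<and>
         (card (S m k) = 2 ^ (m - 1) \<longleftrightarrow> odd m \<and> k = 0)"
proof -
  have m: "0 < m" and half: "(2::nat) ^ m = 2 * 2 ^ (m - 1)"
    using assms(1) by (simp_all flip: power_Suc)
  show ?thesis
  proof (cases "k = 0")
    case True
    define E where "E = {j \<in> {1..<(2::int) ^ m - 1}. 2 * popcount (nat j) = m}"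
    have "finite E"
      unfolding E_def by (rule finite_subset[of _ "{1..<2 ^ m - 1}"]) auto
    then have "card E = 0 \<longleftrightarrow> odd m"
      using balanced_popcount_empty_iff[OF m] by (simp add: E_def)
    then show ?thesis
      using card_S_zero[OF m] True half unfolding E_def[symmetric] by auto
  next
    case False
    then show ?thesis
      using card_S_less[OF m _ assms(3)] assms(2) half by simp
  qed
qed

end
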